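(* If every tree is graceful, then every tree is supergraceful.
   Context: A graceful labeling of a graph with $q$ edges is an injective map $\varphi: V \to \{0,\dots,q\}$ whose induced edge labels $|\varphi(u)-\varphi(v)|$, $uv\in E$, are pairwise distinct. For a graph with $p$ nodes and $q$ edges, a total labeling is a map $\varphi: V \to \{1,\dots,p+q\}$ such that the $p$ node labels and the $q$ edge labels $|\varphi(u)-\varphi(v)|$ are all pairwise distinct, together forming exactly $\{1,\dots,p+q\}$; a graph is supergraceful if it admits a total labeling. *)

theory Defs
  imports Main
begin

text \<open>Finite simple graphs with vertex set V (a finite set of naturals) and a
symmetric, irreflexive adjacency relation E whose edges lie inside V.
Every finite graph is isomorphic to one of this form.\<close>

definition simple_graph :: "nat set \<Rightarrow> (nat \<Rightarrow> nat \<Rightarrow> bool) \<Rightarrow> bool" where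
  "simple_graph V E \<longleftrightarrow> finite V \<and>
     (\<forall>u v. E u v \<longrightarrow> u \<in> V \<and> v \<in> V \<and> u \<noteq> v \<and> E v u)"

definition edges :: "(nat \<Rightarrow> nat \<Rightarrow> bool) \<Rightarrow> nat set set" where
  "edges E = {{u, v} | u v. E u v}"

definition connected_graph :: "nat set \<Rightarrow> (nat \<Rightarrow> nat \<Rightarrow> bool) \<Rightarrow> bool" where
  "connected_graph V E \<longleftrightarrow> (\<forall>u\<in>V. \<forall>v\<in>V. E\<^sup>*\<^sup>* u v)"

definition is_cycle :: "(nat \<Rightarrow> nat \<Rightarrow> bool) \<Rightarrow> nat list \<Rightarrow> bool" where
  "is_cycle E cs \<longleftrightarrow> length cs \<ge> 3 \<and> distinct cs \<and>
     (\<forall>i. Suc i < length cs \<longrightarrow> E (cs ! i) (cs ! Suc i)) \<and>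
     E (last cs) (hd cs)"

definition acyclic_graph :: "(nat \<Rightarrow> nat \<Rightarrow> bool) \<Rightarrow> bool" where
  "acyclic_graph E \<longleftrightarrow> (\<nexists>cs. is_cycle E cs)"

definition is_tree :: "nat set \<Rightarrow> (nat \<Rightarrow> nat \<Rightarrow> bool) \<Rightarrow> bool" where
  "is_tree V E \<longleftrightarrow> simple_graph V E \<and> V \<noteq> {} \<and> connected_graph V E \<and> acyclic_graph E"

definition elab :: "(nat \<Rightarrow> nat) \<Rightarrow> nat \<Rightarrow> nat \<Rightarrow> nat" where
  "elab \<phi> u v = (if \<phi> u \<le> \<phi> v then \<phi> v - \<phi> u else \<phi> u - \<phi> v)"

definition edge_labels_distinct :: "(nat \<Rightarrow> nat \<Rightarrow> bool) \<Rightarrow> (nat \<Rightarrow> nat) \<Rightarrow> bool" where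
  "edge_labels_distinct E \<phi> \<longleftrightarrow>
     (\<forall>u v x y. E u v \<longrightarrow> E x y \<longrightarrow> elab \<phi> u v = elab \<phi> x y \<longrightarrow> {u, v} = {x, y})"

definition graceful_labeling :: "nat set \<Rightarrow> (nat \<Rightarrow> nat \<Rightarrow> bool) \<Rightarrow> (nat \<Rightarrow> nat) \<Rightarrow> bool" where
  "graceful_labeling V E \<phi> \<longleftrightarrow>
     inj_on \<phi> V \<and> \<phi> ` V \<subseteq> {0..card (edges E)} \<and> edge_labels_distinct E \<phi>"

definition graceful :: "nat set \<Rightarrow> (nat \<Rightarrow> nat \<Rightarrow> bool) \<Rightarrow> bool" where
  "graceful V E \<longleftrightarrow> (\<exists>\<phi>. graceful_labeling V E \<phi>)"

definition total_labeling :: "nat set \<Rightarrow> (nat \<Rightarrow> nat \<Rightarrow> bool) \<Rightarrow> (nat \<Rightarrow> nat) \<Rightarrow> bool" where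
  "total_labeling V E \<phi> \<longleftrightarrow>
     \<phi> ` V \<subseteq> {1..card V + card (edges E)} \<and>
     inj_on \<phi> V \<and> edge_labels_distinct E \<phi> \<and>
     (\<forall>w\<in>V. \<forall>u v. E u v \<longrightarrow> \<phi> w \<noteq> elab \<phi> u v) \<and>
     \<phi> ` V \<union> {elab \<phi> u v | u v. E u v} = {1..card V + card (edges E)}"

definition supergraceful :: "nat set \<Rightarrow> (nat \<Rightarrow> nat \<Rightarrow> bool) \<Rightarrow> bool" where
  "supergraceful V E \<longleftrightarrow> (\<exists>\<phi>. total_labeling V E \<phi>)"

end

theory Submission
  imports Defs
begin

text \<open>A graceful labeling f of a graph with q edges is injective into {0..q}, so the graph
has at most q + 1 vertices; an acyclic graph has at least q + 1. Hence for a tree f is a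
bijection onto {0..q}, and since its q edge labels are distinct elements of {1..q}, they are
all of {1..q}. The labeling 2f + 1 then puts the odd numbers 1, 3, ..., 2q + 1 on the vertices
and the even numbers 2, 4, ..., 2q on the edges, which together fill {1..p + q} with p = q + 1.\<close>

definition is_path :: "(nat \<Rightarrow> nat \<Rightarrow> bool) \<Rightarrow> nat set \<Rightarrow> nat list \<Rightarrow> bool" where
  "is_path E V xs \<longleftrightarrow> xs \<noteq> [] \<and> distinct xs \<and> set xs \<subseteq> V \<and>
     (\<forall>i. Suc i < length xs \<longrightarrow> E (xs ! i) (xs ! Suc i))"

lemma is_path_snoc:
  assumes "is_path E V xs" "x \<in> V" "x \<notin> set xs" "E (last xs) x"
  shows "is_path E V (xs @ [x])"
  using assms unfolding is_path_def
  by (auto simp: nth_append last_conv_nth less_Suc_eq) (metis diff_Suc_Suc minus_nat.diff_0)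

lemma length_is_path_le_card:
  assumes "finite V" "is_path E V xs"
  shows "length xs \<le> card V"
  using assms by (metis card_mono distinct_card is_path_def)

lemma is_cycle_drop_is_path:
  assumes "is_path E V xs" "i + 3 \<le> length xs" "E (last xs) (xs ! i)"
  shows "is_cycle E (drop i xs)"
  using assms by (auto simp: is_cycle_def is_path_def hd_drop_conv_nth)

lemma ex_longest_path:
  assumes "finite V" "v \<in> V"
  obtains xs where "is_path E V xs" "\<And>ys. is_path E V ys \<Longrightarrow> length ys \<le> length xs"
proof -
  have "is_path E V [v]"
    using assms(2) by (simp add: is_path_def)
  moreover have "\<forall>ys. is_path E V ys \<longrightarrow> length ys < card V + 1"
    using length_is_path_le_card[OF assms(1)] by (simp add: le_imp_less_Suc)
  ultimately show thesis
    using ex_has_greatest_nat[of "is_path E V" "[v]" length "card V + 1"] that by blast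
qed

text \<open>The last vertex v of a longest path is a leaf: a neighbour off the path would extend
the path, and a neighbour on the path other than the predecessor of v would close a cycle.\<close>

lemma acyclic_graph_has_leaf:
  assumes sg: "simple_graph V E" and ac: "acyclic_graph E" and "V \<noteq> {}"
  shows "\<exists>v\<in>V. \<exists>w. \<forall>x. E v x \<longrightarrow> x = w"
proof -
  have fin: "finite V" using sg by (simp add: simple_graph_def)
  obtain xs where xs: "is_path E V xs"
    and longest: "\<And>ys. is_path E V ys \<Longrightarrow> length ys \<le> length xs"
    using ex_longest_path[OF fin] \<open>V \<noteq> {}\<close> by blast
  have "xs \<noteq> []" using xs by (simp add: is_path_def)
  have "last xs \<in> V" using xs \<open>xs \<noteq> []\<close> by (auto simp: is_path_def)
  moreover have "x = xs ! (length xs - 2)" if "E (last xs) x" for x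
  proof (rule ccontr)
    assume not_pred: "x \<noteq> xs ! (length xs - 2)"
    have "x \<in> V" "x \<noteq> last xs" using that sg by (auto simp: simple_graph_def)
    show False
    proof (cases "x \<in> set xs")
      case False
      with is_path_snoc[OF xs \<open>x \<in> V\<close> _ that] longest show False by fastforce
    next
      case True
      then obtain i where i: "i < length xs" "xs ! i = x" by (auto simp: in_set_conv_nth)
      have "i \<noteq> length xs - 1"
        using i \<open>x \<noteq> last xs\<close> \<open>xs \<noteq> []\<close> by (auto simp: last_conv_nth)
      moreover have "i \<noteq> length xs - 2" using i not_pred by blast
      ultimately have "i + 3 \<le> length xs" using i by linarith
      with is_cycle_drop_is_path[OF xs] i that ac show False
        by (auto simp: acyclic_graph_def)
    qed
  qed
  ultimately show ?thesis by blast
qed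

definition delete_vertex :: "(nat \<Rightarrow> nat \<Rightarrow> bool) \<Rightarrow> nat \<Rightarrow> nat \<Rightarrow> nat \<Rightarrow> bool" where
  "delete_vertex E v = (\<lambda>a b. E a b \<and> a \<noteq> v \<and> b \<noteq> v)"

lemma simple_graph_delete_vertex:
  "simple_graph V E \<Longrightarrow> simple_graph (V - {v}) (delete_vertex E v)"
  by (auto simp: simple_graph_def delete_vertex_def)

lemma acyclic_graph_delete_vertex:
  "acyclic_graph E \<Longrightarrow> acyclic_graph (delete_vertex E v)"
  unfolding acyclic_graph_def is_cycle_def delete_vertex_def by blast

lemma edges_subset_delete_leaf:
  assumes "simple_graph V E" "\<forall>x. E v x \<longrightarrow> x = w"
  shows "edges E \<subseteq> insert {v, w} (edges (delete_vertex E v))"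
proof
  fix e assume "e \<in> edges E"
  then obtain a b where e: "e = {a, b}" "E a b" by (auto simp: edges_def)
  moreover have "E b a" using e(2) assms(1) by (auto simp: simple_graph_def)
  ultimately show "e \<in> insert {v, w} (edges (delete_vertex E v))"
    using assms(2) by (cases "a = v \<or> b = v") (auto simp: edges_def delete_vertex_def)
qed

lemma finite_edges:
  assumes "simple_graph V E"
  shows "finite (edges E)"
proof -
  have "edges E \<subseteq> Pow V" using assms by (auto simp: edges_def simple_graph_def)
  moreover have "finite V" using assms by (simp add: simple_graph_def)
  ultimately show ?thesis by (meson finite_Pow_iff finite_subset)
qed

lemma card_edges_less_card_if_acyclic:
  "simple_graph V E \<Longrightarrow> acyclic_graph E \<Longrightarrow> V \<noteq> {} \<Longrightarrow> card (edges E) < card V"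
proof (induction "card V" arbitrary: V E rule: less_induct)
  case less
  have fin: "finite V" using less.prems by (simp add: simple_graph_def)
  obtain v w where "v \<in> V" and leaf: "\<forall>x. E v x \<longrightarrow> x = w"
    using acyclic_graph_has_leaf[OF less.prems] by blast
  show ?case
  proof (cases "V = {v}")
    case True
    then have "edges E = {}" using less.prems(1) by (auto simp: edges_def simple_graph_def)
    with True show ?thesis by simp
  next
    case False
    let ?V' = "V - {v}" and ?E' = "delete_vertex E v"
    have sg': "simple_graph ?V' ?E'" using simple_graph_delete_vertex[OF less.prems(1)] .
    have smaller: "card ?V' < card V" using fin \<open>v \<in> V\<close> by (meson card_Diff1_less)
    have "card (edges E) \<le> card (insert {v, w} (edges ?E'))"
      using edges_subset_delete_leaf[OF less.prems(1) leaf] finite_edges[OF sg']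
      by (simp add: card_mono)
    also have "\<dots> \<le> card (edges ?E') + 1" by (simp add: card_insert_le_m1)
    also have "card (edges ?E') < card ?V'"
      using less.hyps[OF smaller sg' acyclic_graph_delete_vertex[OF less.prems(2)]]
        False \<open>v \<in> V\<close> by blast
    finally show ?thesis using smaller by linarith
  qed
qed

lemma card_le_Suc_card_edges_if_graceful:
  "graceful_labeling V E f \<Longrightarrow> card V \<le> card (edges E) + 1"
  unfolding graceful_labeling_def using card_inj_on_le[of f V "{0..card (edges E)}"] by simp

lemma graceful_labeling_image:
  assumes "graceful_labeling V E f" "card V = card (edges E) + 1"
  shows "f ` V = {0..card (edges E)}"
  using assms card_image[of f V] by (simp add: graceful_labeling_def card_subset_eq)

lemma elab_eq_Max_minus_Min: "elab f u v = Max (f ` {u, v}) - Min (f ` {u, v})"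
  by (simp add: elab_def max_def min_def)

lemma graceful_labeling_edge_labels:
  assumes sg: "simple_graph V E" and gl: "graceful_labeling V E f"
  shows "{elab f u v | u v. E u v} = {1..card (edges E)}"
proof -
  define h where "h e = Max (f ` e) - Min (f ` e)" for e
  have h_pair: "h {u, v} = elab f u v" for u v
    by (simp add: h_def elab_eq_Max_minus_Min)
  have labels: "{elab f u v | u v. E u v} = h ` edges E"
    unfolding edges_def h_pair[symmetric] by blast
  have "inj_on h (edges E)"
  proof (rule inj_onI)
    fix a b assume "a \<in> edges E" "b \<in> edges E" "h a = h b"
    then obtain u v x y where "a = {u, v}" "E u v" "b = {x, y}" "E x y"
      by (auto simp: edges_def)
    with \<open>h a = h b\<close> gl show "a = b"
      unfolding graceful_labeling_def edge_labels_distinct_def by (metis h_pair)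
  qed
  then have "card {elab f u v | u v. E u v} = card (edges E)"
    by (simp add: labels card_image)
  moreover have "{elab f u v | u v. E u v} \<subseteq> {1..card (edges E)}"
  proof clarify
    fix u v assume "E u v"
    then have "u \<in> V" "v \<in> V" "u \<noteq> v" using sg by (auto simp: simple_graph_def)
    with gl have "f u \<noteq> f v" "f u \<le> card (edges E)" "f v \<le> card (edges E)"
      unfolding graceful_labeling_def inj_on_def by auto
    then show "elab f u v \<in> {1..card (edges E)}" by (auto simp: elab_def)
  qed
  ultimately show ?thesis by (simp add: card_subset_eq)
qed

lemma elab_double_Suc: "elab (\<lambda>x. 2 * f x + 1) u v = 2 * elab f u v"
  by (auto simp: elab_def)

lemma odd_even_image_atLeastAtMost:
  "(\<lambda>k. 2 * k + 1) ` {0..q} \<union> (\<lambda>k. 2 * k) ` {1..q} = {1..2 * q + 1 :: nat}"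
proof (intro set_eqI iffI)
  fix n :: nat assume n: "n \<in> {1..2 * q + 1}"
  show "n \<in> (\<lambda>k. 2 * k + 1) ` {0..q} \<union> (\<lambda>k. 2 * k) ` {1..q}"
  proof (cases "even n")
    case True
    then obtain k where "n = 2 * k" by blast
    with n show ?thesis by auto
  next
    case False
    then obtain k where "n = 2 * k + 1" using oddE by blast
    with n show ?thesis by auto
  qed
qed auto

lemma total_labeling_double_Suc_graceful:
  assumes sg: "simple_graph V E" and gl: "graceful_labeling V E f"
    and p: "card V = card (edges E) + 1"
  shows "total_labeling V E (\<lambda>x. 2 * f x + 1)"
proof -
  let ?q = "card (edges E)" and ?\<phi> = "\<lambda>x. 2 * f x + 1"
  have "?\<phi> ` V = (\<lambda>k. 2 * k + 1) ` f ` V" by (simp add: image_image)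
  then have nodes: "?\<phi> ` V = (\<lambda>k. 2 * k + 1) ` {0..?q}"
    by (simp only: graceful_labeling_image[OF gl p])
  have labels: "{elab ?\<phi> u v | u v. E u v} = (\<lambda>k. 2 * k) ` {1..?q}"
    unfolding elab_double_Suc graceful_labeling_edge_labels[OF sg gl, symmetric] by blast
  have all_labels: "?\<phi> ` V \<union> {elab ?\<phi> u v | u v. E u v} = {1..card V + ?q}"
  proof -
    have "card V + ?q = 2 * ?q + 1" using p by simp
    then show ?thesis unfolding nodes labels odd_even_image_atLeastAtMost by simp
  qed
  have "inj_on ?\<phi> V"
    using gl by (simp add: graceful_labeling_def inj_on_def)
  moreover have "edge_labels_distinct E ?\<phi>"
    unfolding edge_labels_distinct_def elab_double_Suc
  proof (intro allI impI)
    fix u v x y assume "E u v" "E x y" "2 * elab f u v = 2 * elab f x y"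
    then have "elab f u v = elab f x y" by simp
    with gl \<open>E u v\<close> \<open>E x y\<close> show "{u, v} = {x, y}"
      unfolding graceful_labeling_def edge_labels_distinct_def by blast
  qed
  moreover have "?\<phi> w \<noteq> elab ?\<phi> u v" for w u v
    unfolding elab_double_Suc by presburger
  ultimately show ?thesis
    using all_labels unfolding total_labeling_def by blast
qed

theorem theorem7p9:
  assumes "\<forall>V E. is_tree V E \<longrightarrow> graceful V E"
  shows "\<forall>V E. is_tree V E \<longrightarrow> supergraceful V E"
proof (intro allI impI)
  fix V E assume tree: "is_tree V E"
  then obtain f where gl: "graceful_labeling V E f" using assms by (auto simp: graceful_def)
  have sg: "simple_graph V E" using tree by (simp add: is_tree_def)
  have "card (edges E) < card V"
    using tree by (intro card_edges_less_card_if_acyclic) (auto simp: is_tree_def)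
  with card_le_Suc_card_edges_if_graceful[OF gl] have "card V = card (edges E) + 1"
    by simp
  with total_labeling_double_Suc_graceful[OF sg gl] show "supergraceful V E"
    by (auto simp: supergraceful_def)
qed

end
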